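(* Let $q$ be a prime power, let $\epsilon>0$, let $p\ge 2$ be an integer, and let $m\le n$ be positive integers. Let $Z$ be a random vector in $\mathbb{F}_q^n$ with distribution $P_Z$. Let $\mathcal{C}$ be drawn uniformly at random from the set $\mathscr{C}$ of all $[n,n-m]_q$ linear codes, and let $H=H_{\mathcal{C}}$ be a parity-check matrix of $\mathcal{C}$ (an $m\times n$ matrix over $\mathbb{F}_q$ of rank $m$ whose kernel is $\mathcal{C}$), chosen independently of $Z$ given $\mathcal{C}$. If $m\le H_p(Z)-p-\log_q(1/\epsilon)$, then $$\mathbb{E}_{\mathcal{C}\sim\mathscr{C}}\big[\Delta^{(m)}_p(P_{HZ})\big]\le\epsilon,$$ where $P_{HZ}$ is the distribution on $\mathbb{F}_q^m$ of $HZ$ for the fixed code $\mathcal{C}$.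
   Context: Rényi entropy (base $q$) of order $p\in(1,\infty)$: $H_p(Z)=\frac{1}{1-p}\log_q\sum_x P_Z(x)^p$. For $f:\mathbb{F}_q^m\to\mathbb{R}$, the normalized norm is $\|f\|_p=\big(q^{-m}\sum_{x\in\mathbb{F}_q^m}|f(x)|^p\big)^{1/p}$, and the $l_p$-smoothness of a distribution $P$ on $\mathbb{F}_q^m$ is $\Delta^{(m)}_p(P):=\|q^mP\|_p-1$. An $[n,k]_q$ linear code is a $k$-dimensional subspace of $\mathbb{F}_q^n$. *)

theory Defs
  imports "HOL-Analysis.Analysis" "HOL-Probability.Probability"
begin

definition renyi_entropy :: "real \<Rightarrow> real \<Rightarrow> 'b::finite pmf \<Rightarrow> real" where
  "renyi_entropy q p P = (1 / (1 - p)) * log q (\<Sum>x\<in>UNIV. (pmf P x) powr p)"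

text \<open>Normalized l_p norm on functions from a finite type with q^m elements:
  (q^{-m} sum |f x|^p)^(1/p), where q^m = CARD('b).\<close>
definition norm_p :: "real \<Rightarrow> ('b::finite \<Rightarrow> real) \<Rightarrow> real" where
  "norm_p p f = ((1 / real CARD('b)) * (\<Sum>x\<in>UNIV. \<bar>f x\<bar> powr p)) powr (1 / p)"

definition lp_smoothness :: "real \<Rightarrow> 'b::finite pmf \<Rightarrow> real" where
  "lp_smoothness p P = norm_p p (\<lambda>x. real CARD('b) * pmf P x) - 1"

definition linear_codes :: "nat \<Rightarrow> ('a::field ^ 'n) set set" where
  "linear_codes k = {C. vec.subspace C \<and> vec.dim C = k}"

definition parity_check :: "'a::field ^ 'n ^ 'm \<Rightarrow> ('a ^ 'n) set \<Rightarrow> bool" where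
  "parity_check H C \<longleftrightarrow> rank H = CARD('m) \<and> {x. H *v x = 0} = C"

end

theory Submission
  imports Defs
begin

text \<open>
  Write q = CARD('a), m = CARD('m) and M(C) = q^(m(p-1)) \<Sum>s P_{HZ}(s)^p, so that
  \<Delta>_p(P_{HZ}) = M(C)^(1/p) - 1. Expanding the p-th power, \<Sum>s P_{HZ}(s)^p is the probability
  that p independent copies x_0, ..., x_{p-1} of Z satisfy x_i - x_0 \<in> C for all i. A uniformly
  random code of codimension m contains a given independent set B with probability at most
  q^(-m|B|); choosing B as a basis x_j - x_0 (j \<in> J) of the differences, the average of M is
  bounded by a sum over J \<subseteq> {1..p-1} in which the remaining points x_K, K = {1..p-1} - J, lie in
  the affine span of x_0 and x_J. A change of variables together with Young's inequality bounds the
  probability of such tuples by (q^|J| R)^|K|, where R = q^(-H_p(Z)). The entropy hypothesis makes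
  each term at most \<epsilon>^|K|, so the average of M is at most (1 + \<epsilon>)^(p-1), and the inequality
  M^(1/p) \<le> (M / (1+\<epsilon>)^(p-1) + (p-1)(1+\<epsilon>)) / p turns this into an average of \<Delta>_p at most \<epsilon>.
\<close>

section \<open>Counting linear codes\<close>

lemma card_field_ge_2: "CARD('a::{finite,field}) \<ge> 2"
proof -
  have "card {0::'a, 1} \<le> CARD('a)" by (rule card_mono) auto
  then show ?thesis by simp
qed

lemma card_subspace:
  fixes S :: "('a::{finite,field}^'n) set"
  assumes "vec.subspace S"
  shows "card S = CARD('a) ^ vec.dim S"
proof -
  obtain B where B: "B \<subseteq> S" "vec.independent B" "S \<subseteq> vec.span B" "card B = vec.dim S"
    using vec.basis_exists[of S] by blast
  have fB: "finite B" using B(2) vec.finiteI_independent by blast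
  have spanB: "vec.span B = S" using vec.span_subspace[OF B(1,3) assms] .
  define L where "L = (\<lambda>u. \<Sum>v\<in>B. u v *s v)"
  have "L ` (B \<rightarrow>\<^sub>E UNIV) = S"
  proof
    show "S \<subseteq> L ` (B \<rightarrow>\<^sub>E UNIV)"
    proof
      fix x assume "x \<in> S"
      then obtain u where u: "x = (\<Sum>v\<in>B. u v *s v)"
        using vec.span_finite[OF fB] spanB by auto
      have "x = L (restrict u B)" unfolding L_def u by (rule sum.cong) auto
      then show "x \<in> L ` (B \<rightarrow>\<^sub>E UNIV)" by auto
    qed
  qed (use vec.span_finite[OF fB] spanB in \<open>auto simp: L_def\<close>)
  moreover have "inj_on L (B \<rightarrow>\<^sub>E UNIV)"
  proof (rule inj_onI)
    fix u w assume u: "u \<in> B \<rightarrow>\<^sub>E UNIV" and w: "w \<in> B \<rightarrow>\<^sub>E UNIV" and "L u = L w"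
    have "(\<Sum>v\<in>B. (u v - w v) *s v) = L u - L w"
      by (simp add: L_def vec.scale_left_diff_distrib sum_subtractf)
    with \<open>L u = L w\<close> have "\<forall>v\<in>B. u v - w v = 0"
      using B(2) vec.dependent_finite[OF fB] by (auto dest: spec[of _ "\<lambda>v. u v - w v"])
    then show "u = w" using u w by (auto simp: PiE_def extensional_def fun_eq_iff)
  qed
  ultimately have "card S = card (B \<rightarrow>\<^sub>E (UNIV::'a set))" by (metis card_image)
  also have "\<dots> = CARD('a) ^ vec.dim S" using fB B(4) by (simp add: card_PiE)
  finally show ?thesis .
qed

definition codes_containing :: "nat \<Rightarrow> ('a::field^'n) set \<Rightarrow> ('a^'n) set set" where
  "codes_containing k B = {C \<in> linear_codes k. B \<subseteq> C}"

text \<open>An injective linear map fixing B and sending v to v' carries codes to codes.\<close>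
lemma card_codes_containing_insert_le:
  fixes B :: "('a::{finite,field}^'n) set"
  assumes B: "vec.independent B" and v: "v \<notin> vec.span B" and v': "v' \<notin> vec.span B"
  shows "card (codes_containing k (insert v B)) \<le> card (codes_containing k (insert v' B))"
proof -
  define f where "f = (\<lambda>x. if x = v then v' else x)"
  have vB: "v \<notin> B" "v' \<notin> B" using v v' vec.span_superset by blast+
  have "f ` insert v B = insert v' B" "inj_on f (insert v B)"
    using vB by (auto simp: f_def inj_on_def)
  then obtain g where g: "Vector_Spaces.linear (*s) (*s) g" "inj g" "\<forall>x\<in>insert v B. g x = f x"
    using vec.linear_independent_extend_inj vec.independent_insertI[OF v B]
      vec.independent_insertI[OF v' B] by metis
  interpret g: Vector_Spaces.linear "(*s)" "(*s)" g by fact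
  have "(\<lambda>C. g ` C) ` codes_containing k (insert v B) \<subseteq> codes_containing k (insert v' B)"
  proof safe
    fix C assume C: "C \<in> codes_containing k (insert v B)"
    then have "vec.subspace C" "vec.dim C = k" "insert v B \<subseteq> C"
      by (auto simp: codes_containing_def linear_codes_def)
    moreover have "insert v' B \<subseteq> g ` C"
      using g(3) \<open>insert v B \<subseteq> C\<close> vB by (force simp: f_def)
    ultimately show "g ` C \<in> codes_containing k (insert v' B)"
      using g.subspace_image vec.dim_image_eq[OF g(1)] g(2)
      by (auto simp: codes_containing_def linear_codes_def inj_on_def inj_def)
  qed
  moreover have "inj_on (\<lambda>C. g ` C) (codes_containing k (insert v B))"
    using g(2) by (auto simp: inj_on_def inj_image_eq_iff)
  ultimately show ?thesis by (metis card_inj_on_le finite)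
qed

lemma card_span_independent:
  fixes B :: "('a::{finite,field}^'n) set"
  assumes "vec.independent B"
  shows "card (vec.span B) = CARD('a) ^ card B"
  using card_subspace[of "vec.span B"] vec.dim_span_eq_card_independent[OF assms]
  by (simp add: vec.subspace_span)

text \<open>Double counting the pairs (C, w) with C containing B and w \<in> C outside the span of B;
  by the symmetry above every such w lies in the same number of codes.\<close>
lemma card_codes_containing_insert_eq:
  fixes B :: "('a::{finite,field}^'n) set"
  assumes B: "vec.independent B" and v: "v \<notin> vec.span B"
  shows "card (codes_containing k (insert v B)) * (CARD('a) ^ CARD('n) - CARD('a) ^ card B)
       = card (codes_containing k B) * (CARD('a) ^ k - CARD('a) ^ card B)"
proof -
  define U where "U = vec.span B"
  define A where "A = codes_containing k B"
  have in_A_iff: "{C \<in> A. w \<in> C} = codes_containing k (insert w B)" for w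
    by (auto simp: A_def codes_containing_def)
  have "card (-U) * card (codes_containing k (insert v B))
      = (\<Sum>w\<in>-U. card (codes_containing k (insert w B)))"
  proof -
    have "card (codes_containing k (insert w B)) = card (codes_containing k (insert v B))"
      if "w \<in> -U" for w
      using card_codes_containing_insert_le[OF B] v that by (simp add: U_def antisym)
    then show ?thesis by simp
  qed
  also have "\<dots> = (\<Sum>w\<in>-U. \<Sum>C\<in>A. if w \<in> C then 1 else 0)"
    by (simp add: in_A_iff[symmetric] sum.If_cases Int_def)
  also have "\<dots> = (\<Sum>C\<in>A. card (C - U))"
    by (subst sum.swap) (simp add: sum.If_cases Int_def set_diff_eq conj_commute)
  also have "\<dots> = (\<Sum>C\<in>A. CARD('a) ^ k - CARD('a) ^ card B)"
  proof (rule sum.cong)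
    fix C assume "C \<in> A"
    then have C: "vec.subspace C" "vec.dim C = k" "B \<subseteq> C"
      by (auto simp: A_def codes_containing_def linear_codes_def)
    then have "U \<subseteq> C" unfolding U_def using vec.span_minimal by blast
    then show "card (C - U) = CARD('a) ^ k - CARD('a) ^ card B"
      using card_subspace[OF C(1)] card_span_independent[OF B] C(2)
      by (simp add: card_Diff_subset U_def)
  qed simp
  also have "card (-U) = CARD('a) ^ CARD('n) - CARD('a) ^ card B"
    using card_span_independent[OF B] by (simp add: Compl_eq_Diff_UNIV card_Diff_subset U_def)
  finally show ?thesis by (simp add: A_def mult.commute)
qed

lemma card_codes_containing_insert:
  fixes B :: "('a::{finite,field}^'n) set"
  assumes B: "vec.independent B" and v: "v \<notin> vec.span B" and k: "k \<le> CARD('n)"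
  shows "card (codes_containing k (insert v B)) * CARD('a) ^ (CARD('n) - k)
       \<le> card (codes_containing k B)"
proof -
  define q where "q = CARD('a)"
  define X where "X = card (codes_containing k (insert v B))"
  define Y where "Y = card (codes_containing k B)"
  have q: "q \<ge> 2" unfolding q_def by (rule card_field_ge_2)
  have eq: "X * (q ^ CARD('n) - q ^ card B) = Y * (q ^ k - q ^ card B)"
    unfolding X_def Y_def q_def by (rule card_codes_containing_insert_eq[OF B v])
  have "card (vec.span B) < card (UNIV :: ('a^'n) set)"
    using v by (intro psubset_card_mono) auto
  then have span_lt: "q ^ card B < q ^ CARD('n)"
    by (simp add: card_span_independent[OF B] q_def)
  show ?thesis
  proof (cases "card B < k")
    case False
    then have "X = 0" using eq span_lt q by simp
    then show ?thesis by (simp add: X_def)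
  next
    case True
    define r where "r = q ^ (CARD('n) - k)"
    have "r * q ^ k = q ^ CARD('n)" using k by (simp add: r_def flip: power_add)
    moreover have "q ^ card B \<le> r * q ^ card B" using q by (simp add: r_def)
    ultimately have "X * r * (q ^ k - q ^ card B) \<le> X * (q ^ CARD('n) - q ^ card B)"
      by (simp add: diff_mult_distrib2 mult.assoc diff_le_mono2)
    also have "\<dots> = Y * (q ^ k - q ^ card B)" by (rule eq)
    finally have "X * r \<le> Y" using True q by (simp add: power_strict_increasing)
    then show ?thesis by (simp add: X_def Y_def r_def q_def)
  qed
qed

lemma card_codes_containing_independent:
  fixes B :: "('a::{finite,field}^'n) set"
  assumes B: "vec.independent B" and k: "k \<le> CARD('n)"
  shows "card (codes_containing k B) * CARD('a) ^ ((CARD('n) - k) * card B)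
       \<le> card (linear_codes k :: ('a^'n) set set)"
proof -
  have "finite B" using B vec.finiteI_independent by blast
  from this B show ?thesis
  proof (induction B rule: finite_induct)
    case empty
    then show ?case by (simp add: codes_containing_def)
  next
    case (insert v B)
    have B: "vec.independent B" using insert.prems vec.independent_mono by blast
    have v: "v \<notin> vec.span B"
      using insert.prems insert.hyps(2) vec.independent_insert[of v B] by simp
    have "card (codes_containing k (insert v B)) * CARD('a) ^ ((CARD('n) - k) * card (insert v B))
        = card (codes_containing k (insert v B)) * CARD('a) ^ (CARD('n) - k)
          * CARD('a) ^ ((CARD('n) - k) * card B)"
      using insert.hyps by (simp add: power_add mult.assoc)
    also have "\<dots> \<le> card (codes_containing k B) * CARD('a) ^ ((CARD('n) - k) * card B)"
      using card_codes_containing_insert[OF B v k] by simp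
    also have "\<dots> \<le> card (linear_codes k :: ('a^'n) set set)" by (rule insert.IH[OF B])
    finally show ?case .
  qed
qed

section \<open>Elementary inequalities\<close>

lemma power_ge_tangent:
  fixes c t :: real
  assumes c: "c > 0" and t: "t \<ge> 0"
  shows "c ^ j + real j * c ^ (j - 1) * (t - c) \<le> t ^ j"
proof (cases j)
  case (Suc i)
  have "1 + real j * (t / c - 1) \<le> (t / c) ^ j"
    using Bernoulli_inequality[of "t / c - 1" j] c t by simp
  then have "c ^ j * (1 + real j * (t / c - 1)) \<le> c ^ j * (t / c) ^ j"
    using c by (intro mult_left_mono) auto
  moreover have "c ^ j * (1 + real j * (t / c - 1)) = c ^ j + real j * c ^ (j - 1) * (t - c)"
    using c Suc by (simp add: field_simps)
  ultimately show ?thesis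
    using c by (simp add: power_divide)
qed simp

lemma young_power:
  fixes a b :: real
  assumes "a \<ge> 0" "b \<ge> 0"
  shows "a * b ^ j \<le> (a ^ (j + 1) + real j * b ^ (j + 1)) / (real j + 1)"
proof (cases "b = 0")
  case False
  with assms have "b ^ (j + 1) + real (j + 1) * b ^ j * (a - b) \<le> a ^ (j + 1)"
    using power_ge_tangent[of b a "j + 1"] by simp
  then show ?thesis by (simp add: field_simps power_add)
qed (use assms in \<open>cases j; simp\<close>)

lemma sum_power_le_card_power_sum:
  fixes w :: "'i \<Rightarrow> real"
  assumes A: "finite A" "A \<noteq> {}" and w: "\<And>x. x \<in> A \<Longrightarrow> w x \<ge> 0" and j: "j \<ge> 1"
  shows "(\<Sum>x\<in>A. w x) ^ j \<le> real (card A) ^ (j - 1) * (\<Sum>x\<in>A. w x ^ j)"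
proof -
  define S where "S = (\<Sum>x\<in>A. w x)"
  define N where "N = real (card A)"
  have N: "N > 0" using A by (simp add: N_def card_gt_0_iff)
  have S: "S \<ge> 0" using w by (simp add: S_def sum_nonneg)
  show ?thesis
  proof (cases "S = 0")
    case True
    then show ?thesis
      using j w by (simp add: S_def sum_nonneg power_0_left)
  next
    case False
    define c where "c = S / N"
    have c: "c > 0" using S False N by (simp add: c_def)
    have "(\<Sum>x\<in>A. c ^ j + real j * c ^ (j - 1) * (w x - c)) = N * c ^ j"
      using N by (simp add: sum.distrib sum_subtractf flip: sum_distrib_left S_def N_def)
        (simp add: c_def)
    moreover have "(\<Sum>x\<in>A. c ^ j + real j * c ^ (j - 1) * (w x - c)) \<le> (\<Sum>x\<in>A. w x ^ j)"
      using power_ge_tangent[OF c] w by (intro sum_mono) auto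
    ultimately have "N ^ (j - 1) * (N * c ^ j) \<le> N ^ (j - 1) * (\<Sum>x\<in>A. w x ^ j)"
      using N by (intro mult_left_mono) auto
    moreover have "N ^ (j - 1) * (N * c ^ j) = S ^ j"
      using N j by (simp add: c_def power_divide mult.assoc[symmetric] flip: power_Suc2)
    ultimately show ?thesis by (simp add: S_def N_def)
  qed
qed

lemma sum_power_pos:
  fixes f :: "'i \<Rightarrow> real"
  assumes "finite A" "\<And>x. x \<in> A \<Longrightarrow> f x \<ge> 0" "(\<Sum>x\<in>A. f x) = 1"
  shows "(\<Sum>x\<in>A. f x ^ p) > 0"
proof -
  have "(\<Sum>x\<in>A. f x ^ p) \<noteq> 0"
  proof
    assume "(\<Sum>x\<in>A. f x ^ p) = 0"
    then have "\<forall>x\<in>A. f x = 0" using assms sum_nonneg_eq_0_iff[of A "\<lambda>x. f x ^ p"] by simp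
    then show False using assms(3) by simp
  qed
  then show ?thesis using assms by (simp add: sum_nonneg order_less_le)
qed

text \<open>Moments of a probability vector are log-convex in the exponent; this is the case
  interpolating between the first and the p-th moment.\<close>
lemma sum_power_Suc_le_moment:
  fixes f :: "'i \<Rightarrow> real"
  assumes A: "finite A" and f: "\<And>x. x \<in> A \<Longrightarrow> f x \<ge> 0" and f1: "(\<Sum>x\<in>A. f x) = 1"
    and j: "j < p"
  shows "(\<Sum>x\<in>A. f x ^ Suc j) \<le> ((\<Sum>x\<in>A. f x ^ p) powr (1 / (real p - 1))) ^ j"
proof -
  define M where "M = (\<Sum>x\<in>A. f x ^ p)"
  define \<alpha> where "\<alpha> = real j / (real p - 1)"
  have M: "M > 0" unfolding M_def by (rule sum_power_pos[OF A f f1])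
  have \<alpha>: "0 \<le> \<alpha>" "\<alpha> \<le> 1" using j by (auto simp: \<alpha>_def divide_le_eq)
  have \<alpha>_p: "(real p - 1) * \<alpha> = real j" using j by (auto simp: \<alpha>_def)
  have pointwise: "f x ^ Suc j / M powr \<alpha> \<le> \<alpha> / M * f x ^ p + (1 - \<alpha>) * f x" if "x \<in> A" for x
  proof (cases "f x = 0")
    case False
    with f that have fx: "f x > 0" by (simp add: order_less_le)
    have "(f x ^ (p - 1) / M) powr \<alpha> * 1 powr (1 - \<alpha>) \<le> \<alpha> * (f x ^ (p - 1) / M) + (1 - \<alpha>) * 1"
      using \<alpha> fx M by (intro Youngs_inequality_0) auto
    moreover have "(f x ^ (p - 1) / M) powr \<alpha> = f x ^ j / M powr \<alpha>"
      using fx M j \<alpha>_p by (simp add: powr_divide powr_powr of_nat_diff flip: powr_realpow)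
    ultimately have "f x * (f x ^ j / M powr \<alpha>) \<le> f x * (\<alpha> * (f x ^ (p - 1) / M) + (1 - \<alpha>))"
      using fx by (intro mult_left_mono) auto
    then show ?thesis
      using j by (simp add: algebra_simps power_eq_if[of _ p])
  qed (use j \<alpha> M in \<open>simp add: power_0_left\<close>)
  have "(\<Sum>x\<in>A. f x ^ Suc j) / M powr \<alpha> \<le> (\<Sum>x\<in>A. \<alpha> / M * f x ^ p + (1 - \<alpha>) * f x)"
    unfolding sum_divide_distrib by (intro sum_mono pointwise)
  also have "\<dots> = \<alpha> / M * M + (1 - \<alpha>) * 1"
    by (simp only: sum.distrib flip: sum_distrib_left M_def f1)
  also have "\<dots> = 1" using M by simp
  finally have "(\<Sum>x\<in>A. f x ^ Suc j) \<le> M powr \<alpha>" using M by simp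
  also have "M powr \<alpha> = (M powr (1 / (real p - 1))) ^ j"
    using M by (simp add: \<alpha>_def powr_powr flip: powr_realpow)
  finally show ?thesis unfolding M_def .
qed

lemma powr_inverse_power:
  fixes M :: real
  assumes "M \<ge> 0" "p > 0"
  shows "(M powr (1 / real p)) ^ p = M"
  using assms by (cases "M = 0") (simp_all add: powr_powr flip: powr_realpow)

text \<open>A power-mean inequality, by Young's inequality at the point a.\<close>
lemma sum_powr_inverse_le:
  fixes M :: "'i \<Rightarrow> real"
  assumes S: "finite S" and a: "a > 0" and M: "\<And>i. i \<in> S \<Longrightarrow> M i \<ge> 0" and p: "p \<ge> 1"
    and sum_le: "(\<Sum>i\<in>S. M i) \<le> real (card S) * a ^ p"
  shows "(\<Sum>i\<in>S. M i powr (1 / real p)) \<le> real (card S) * a"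
proof -
  have young: "M i powr (1 / real p) * a ^ (p - 1) \<le> (M i + real (p - 1) * a ^ p) / real p"
    if "i \<in> S" for i
    using young_power[of "M i powr (1 / real p)" a "p - 1"] a p M[OF that]
    by (simp add: powr_inverse_power of_nat_diff)
  have "(\<Sum>i\<in>S. M i powr (1 / real p)) * a ^ (p - 1)
      \<le> (\<Sum>i\<in>S. (M i + real (p - 1) * a ^ p) / real p)"
    unfolding sum_distrib_right by (intro sum_mono young)
  also have "\<dots> = ((\<Sum>i\<in>S. M i) + real (card S) * (real (p - 1) * a ^ p)) / real p"
    by (simp add: sum.distrib flip: sum_divide_distrib)
  also have "\<dots> \<le> (real (card S) * a ^ p + real (card S) * (real (p - 1) * a ^ p)) / real p"
    using sum_le p by (intro divide_right_mono add_right_mono) auto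
  also have "\<dots> = real (card S) * a * a ^ (p - 1)"
    using p by (simp add: of_nat_diff field_simps flip: power_Suc)
  finally show ?thesis using a by simp
qed

section \<open>Tuples with affinely dependent points\<close>

definition affine_comb :: "nat set \<Rightarrow> (nat \<Rightarrow> 'a::field) \<Rightarrow> (nat \<Rightarrow> 'a^'n) \<Rightarrow> 'a^'n" where
  "affine_comb J c x = x 0 + (\<Sum>t\<in>J. c t *s (x t - x 0))"

definition affinely_spans :: "nat set \<Rightarrow> nat set \<Rightarrow> (nat \<Rightarrow> 'a::field^'n) \<Rightarrow> bool" where
  "affinely_spans J K x \<longleftrightarrow> (\<forall>i\<in>K. \<exists>c. x i = affine_comb J c x)"

text \<open>J indexes a basis of the differences x i - x 0, i \<in> I.\<close>
lemma card_codes_containing_differences: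
  fixes x :: "nat \<Rightarrow> 'a::{finite,field}^'n"
  assumes k: "k \<le> CARD('n)" and I: "finite I"
  obtains J where "J \<subseteq> I" "affinely_spans J (I - J) x"
    "card {C \<in> linear_codes k. \<forall>i\<in>I. x i - x 0 \<in> C} * CARD('a) ^ ((CARD('n) - k) * card J)
       \<le> card (linear_codes k :: ('a^'n) set set)"
proof -
  define g where "g = (\<lambda>t. x t - x 0)"
  obtain B where B: "B \<subseteq> g ` I" "vec.independent B" "g ` I \<subseteq> vec.span B"
    using vec.maximal_independent_subset[of "g ` I"] by blast
  have fB: "finite B" using B(2) vec.finiteI_independent by blast
  define J where "J = inv_into I g ` B"
  have JI: "J \<subseteq> I" unfolding J_def using B(1) by (auto intro: inv_into_into)
  have gJ: "g ` J = B" unfolding J_def using image_inv_into_cancel[OF refl B(1)] by blast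
  have cardJ: "card J = card B"
    unfolding J_def using card_image[OF inj_on_inv_into[OF B(1)]] .
  have injg: "inj_on g J" using gJ cardJ JI I by (simp add: eq_card_imp_inj_on finite_subset)
  have "affinely_spans J (I - J) x"
    unfolding affinely_spans_def
  proof
    fix i assume "i \<in> I - J"
    then have "g i \<in> vec.span B" using B(3) by auto
    then obtain u where "g i = (\<Sum>v\<in>B. u v *s v)" using vec.span_finite[OF fB] by auto
    also have "\<dots> = (\<Sum>t\<in>J. u (g t) *s g t)"
      unfolding gJ[symmetric] by (rule sum.reindex[OF injg, unfolded o_def])
    finally show "\<exists>c. x i = affine_comb J c x"
      by (intro exI[of _ "\<lambda>t. u (g t)"]) (simp add: affine_comb_def g_def algebra_simps)
  qed
  moreover have "{C \<in> linear_codes k. \<forall>i\<in>I. x i - x 0 \<in> C} \<subseteq> codes_containing k B"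
    using B(1) unfolding g_def codes_containing_def by auto
  then have "card {C \<in> linear_codes k. \<forall>i\<in>I. x i - x 0 \<in> C}
        * CARD('a) ^ ((CARD('n) - k) * card J)
      \<le> card (codes_containing k B) * CARD('a) ^ ((CARD('n) - k) * card B)"
    by (simp add: cardJ card_mono)
  ultimately show ?thesis
    using that JI card_codes_containing_independent[OF B(2) k] by (meson order.trans)
qed

lemma card_codes_containing_differences_le_sum:
  fixes x :: "nat \<Rightarrow> 'a::{finite,field}^'n"
  assumes k: "k \<le> CARD('n)" and I: "finite I"
  shows "real (card {C \<in> linear_codes k. \<forall>i\<in>I. x i - x 0 \<in> C})
    \<le> real (card (linear_codes k :: ('a^'n) set set)) *
       (\<Sum>J\<in>Pow I. of_bool (affinely_spans J (I - J) x) *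
          inverse (real CARD('a) ^ (CARD('n) - k)) ^ card J)"
proof -
  define Q :: real where "Q = real CARD('a) ^ (CARD('n) - k)"
  define w where "w = inverse Q"
  obtain J where J: "J \<subseteq> I" "affinely_spans J (I - J) x"
    and le: "card {C \<in> linear_codes k. \<forall>i\<in>I. x i - x 0 \<in> C}
        * CARD('a) ^ ((CARD('n) - k) * card J) \<le> card (linear_codes k :: ('a^'n) set set)"
    using card_codes_containing_differences[OF k I] .
  have "real (card {C \<in> linear_codes k. \<forall>i\<in>I. x i - x 0 \<in> C}) * Q ^ card J
      \<le> real (card (linear_codes k :: ('a^'n) set set))"
    using of_nat_mono[OF le, where 'a = real] by (simp add: Q_def power_mult)
  moreover have "Q > 0" by (simp add: Q_def)
  ultimately have "real (card {C \<in> linear_codes k. \<forall>i\<in>I. x i - x 0 \<in> C})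
      \<le> real (card (linear_codes k :: ('a^'n) set set)) * w ^ card J"
    by (simp add: w_def power_inverse field_simps)
  also have "\<dots> \<le> real (card (linear_codes k :: ('a^'n) set set)) *
       (\<Sum>J\<in>Pow I. of_bool (affinely_spans J (I - J) x) * w ^ card J)"
  proof (rule mult_left_mono)
    show "w ^ card J \<le> (\<Sum>J\<in>Pow I. of_bool (affinely_spans J (I - J) x) * w ^ card J)"
      using J I
        member_le_sum[of J "Pow I" "\<lambda>J. of_bool (affinely_spans J (I - J) x) * w ^ card J"]
      by (simp add: w_def Q_def)
  qed simp
  finally show ?thesis unfolding w_def Q_def .
qed

lemma sum_PiE_prod_power_at:
  fixes P :: "'v::finite \<Rightarrow> real" and S :: "'i set"
  assumes S: "finite S" "t \<in> S" and P1: "(\<Sum>z\<in>UNIV. P z) = 1"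
  shows "(\<Sum>y\<in>S \<rightarrow>\<^sub>E UNIV. (\<Prod>s\<in>S - {t}. P (y s)) * P (y t) ^ r) = (\<Sum>z\<in>UNIV. P z ^ r)"
proof -
  define g where "g = (\<lambda>s u. if s = t then P u ^ r else P u)"
  have "(\<Sum>y\<in>S \<rightarrow>\<^sub>E UNIV. (\<Prod>s\<in>S - {t}. P (y s)) * P (y t) ^ r)
      = (\<Sum>y\<in>S \<rightarrow>\<^sub>E UNIV. \<Prod>s\<in>S. g s (y s))"
  proof (rule sum.cong)
    fix y :: "'i \<Rightarrow> 'v"
    have "(\<Prod>s\<in>S - {t}. g s (y s)) = (\<Prod>s\<in>S - {t}. P (y s))"
      by (rule prod.cong) (auto simp: g_def)
    then show "(\<Prod>s\<in>S - {t}. P (y s)) * P (y t) ^ r = (\<Prod>s\<in>S. g s (y s))"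
      using S by (simp add: prod.remove g_def)
  qed simp
  also have "\<dots> = (\<Prod>s\<in>S. \<Sum>u\<in>UNIV. g s u)"
    using prod_sum_PiE[of S "\<lambda>_. UNIV" g] S by simp
  also have "\<dots> = (\<Sum>u\<in>UNIV. g t u) * (\<Prod>s\<in>S - {t}. \<Sum>u\<in>UNIV. g s u)"
    using S by (simp add: prod.remove)
  also have "(\<Prod>s\<in>S - {t}. \<Sum>u\<in>UNIV. g s u) = 1"
    using P1 by (intro prod.neutral) (auto simp: g_def)
  finally show ?thesis by (simp add: g_def)
qed

lemma affine_comb_cong:
  assumes "\<And>t. t \<in> J \<Longrightarrow> c t = c' t" "\<And>t. t \<in> insert 0 J \<Longrightarrow> x t = y t"
  shows "affine_comb J c x = affine_comb J c' y"
  using assms by (simp add: affine_comb_def cong: sum.cong)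

lemma affine_comb_upd:
  assumes J: "finite J" "t \<in> J" "t \<noteq> 0"
  shows "affine_comb J c (x(t := u)) = affine_comb J c (x(t := 0)) + c t *s u"
proof -
  define S where "S = (\<Sum>s\<in>J - {t}. c s *s (x s - x 0))"
  have "(\<Sum>s\<in>J - {t}. c s *s ((x(t := v)) s - (x(t := v)) 0)) = S" for v
    unfolding S_def using J(3) by (intro sum.cong) auto
  then have upd: "affine_comb J c (x(t := v)) = x 0 + (c t *s (v - x 0) + S)" for v
    unfolding affine_comb_def using J by (simp add: sum.remove[OF J(1,2)])
  show ?thesis unfolding upd by (simp add: vector_ssub_ldistrib algebra_simps)
qed

text \<open>For c t \<noteq> 0 the coordinate y t can be traded for the value affine_comb J c y.\<close>
lemma sum_PiE_prod_affine_comb_power: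
  fixes P :: "'a::{finite,field}^'n \<Rightarrow> real"
  assumes J: "finite J" "0 \<notin> J" "t \<in> J" and ct: "c t \<noteq> 0" and P1: "(\<Sum>z\<in>UNIV. P z) = 1"
  shows "(\<Sum>y\<in>insert 0 J \<rightarrow>\<^sub>E UNIV. (\<Prod>s\<in>insert 0 J - {t}. P (y s)) * P (affine_comb J c y) ^ r)
       = (\<Sum>z\<in>UNIV. P z ^ r)"
proof -
  define Y where "Y = insert 0 J \<rightarrow>\<^sub>E (UNIV :: ('a^'n) set)"
  define \<rho> where "\<rho> y = affine_comb J c (y(t := 0))" for y :: "nat \<Rightarrow> 'a^'n"
  define \<sigma> where "\<sigma> y = y(t := affine_comb J c y)" for y :: "nat \<Rightarrow> 'a^'n"
  define \<tau> where "\<tau> y = y(t := inverse (c t) *s (y t - \<rho> y))" for y :: "nat \<Rightarrow> 'a^'n"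
  have t0: "t \<noteq> 0" using J(2,3) by metis
  have \<rho>_upd: "\<rho> (y(t := u)) = \<rho> y" for y u by (simp add: \<rho>_def)
  have comb: "affine_comb J c y = \<rho> y + c t *s y t" for y
    using affine_comb_upd[OF J(1,3) t0, of c y "y t"] by (simp add: \<rho>_def)
  have upd_Y: "y(t := u) \<in> Y" if "y \<in> Y" for y u
    using that J by (auto simp: Y_def PiE_def extensional_def)
  have "bij_betw \<sigma> Y Y"
  proof (rule bij_betw_byWitness[where f' = \<tau>])
    show "\<forall>y\<in>Y. \<tau> (\<sigma> y) = y"
      using ct comb \<rho>_upd by (simp add: \<sigma>_def \<tau>_def vec.scale_scale)
    show "\<forall>y\<in>Y. \<sigma> (\<tau> y) = y"
      using ct comb[of "\<tau> _"] \<rho>_upd by (simp add: \<sigma>_def \<tau>_def vec.scale_scale)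
  qed (auto simp: \<sigma>_def \<tau>_def intro: upd_Y)
  have \<sigma>_off_t: "(\<Prod>s\<in>insert 0 J - {t}. P (\<sigma> y s)) = (\<Prod>s\<in>insert 0 J - {t}. P (y s))" for y
    by (rule prod.cong) (auto simp: \<sigma>_def)
  have "(\<Sum>y\<in>Y. (\<Prod>s\<in>insert 0 J - {t}. P (y s)) * P (affine_comb J c y) ^ r)
      = (\<Sum>y\<in>Y. (\<Prod>s\<in>insert 0 J - {t}. P (\<sigma> y s)) * P (\<sigma> y t) ^ r)"
    by (simp add: \<sigma>_off_t) (simp add: \<sigma>_def)
  also have "\<dots> = (\<Sum>y\<in>Y. (\<Prod>s\<in>insert 0 J - {t}. P (y s)) * P (y t) ^ r)"
    using \<open>bij_betw \<sigma> Y Y\<close> by (rule sum.reindex_bij_betw)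
  also have "\<dots> = (\<Sum>z\<in>UNIV. P z ^ r)"
    unfolding Y_def using J P1 by (intro sum_PiE_prod_power_at) auto
  finally show ?thesis unfolding Y_def .
qed

text \<open>A Hoelder-type bound: by Young's inequality the factor P (y t) may be traded for a
  power of P (affine_comb J c y), which is again a free coordinate.\<close>
lemma sum_PiE_prod_affine_comb_le:
  fixes P :: "'a::{finite,field}^'n \<Rightarrow> real"
  assumes J: "finite J" "0 \<notin> J" and P: "\<And>z. P z \<ge> 0" and P1: "(\<Sum>z\<in>UNIV. P z) = 1"
  shows "(\<Sum>y\<in>insert 0 J \<rightarrow>\<^sub>E UNIV. (\<Prod>s\<in>insert 0 J. P (y s)) * P (affine_comb J c y) ^ j)
       \<le> (\<Sum>z\<in>UNIV. P z ^ Suc j)"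
proof (cases "\<forall>t\<in>J. c t = 0")
  case True
  then have comb: "affine_comb J c y = y 0" for y by (simp add: affine_comb_def)
  have "(\<Sum>y\<in>insert 0 J \<rightarrow>\<^sub>E UNIV. (\<Prod>s\<in>insert 0 J. P (y s)) * P (affine_comb J c y) ^ j)
      = (\<Sum>y\<in>insert 0 J \<rightarrow>\<^sub>E UNIV. (\<Prod>s\<in>insert 0 J - {0}. P (y s)) * P (y 0) ^ Suc j)"
    using J by (simp add: comb prod.insert_remove mult_ac)
  also have "\<dots> = (\<Sum>z\<in>UNIV. P z ^ Suc j)"
    using J P1 by (intro sum_PiE_prod_power_at) auto
  finally show ?thesis by simp
next
  case False
  then obtain t where t: "t \<in> J" "c t \<noteq> 0" by blast
  define Y where "Y = insert 0 J \<rightarrow>\<^sub>E (UNIV :: ('a^'n) set)"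
  define Q where "Q y = (\<Prod>s\<in>insert 0 J - {t}. P (y s))" for y :: "nat \<Rightarrow> 'a^'n"
  have "(\<Sum>y\<in>Y. (\<Prod>s\<in>insert 0 J. P (y s)) * P (affine_comb J c y) ^ j)
      = (\<Sum>y\<in>Y. Q y * (P (y t) * P (affine_comb J c y) ^ j))"
    using J t by (simp add: Q_def prod.remove[of _ t] mult_ac)
  also have "\<dots> \<le> (\<Sum>y\<in>Y. Q y *
      ((P (y t) ^ Suc j + real j * P (affine_comb J c y) ^ Suc j) / (real j + 1)))"
    using young_power P by (intro sum_mono mult_left_mono) (auto simp: Q_def prod_nonneg)
  also have "\<dots> = ((\<Sum>y\<in>Y. Q y * P (y t) ^ Suc j)
      + real j * (\<Sum>y\<in>Y. Q y * P (affine_comb J c y) ^ Suc j)) / (real j + 1)"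
    by (simp add: sum_divide_distrib sum.distrib sum_distrib_left algebra_simps add_divide_distrib)
  also have "\<dots> = (\<Sum>z\<in>UNIV. P z ^ Suc j)"
    using sum_PiE_prod_power_at[of "insert 0 J" t P "Suc j"]
      sum_PiE_prod_affine_comb_power[of J t c P "Suc j"] J t P1
    by (simp add: Y_def Q_def field_simps)
  finally show ?thesis unfolding Y_def .
qed

lemma affinely_spans_subset_image:
  fixes J K :: "nat set"
  assumes J: "J \<subseteq> {1..<p}" and K: "K = {1..<p} - J" and p: "0 < p"
  shows "{x \<in> {..<p} \<rightarrow>\<^sub>E (UNIV :: ('a::field^'n) set). affinely_spans J K x}
       \<subseteq> (\<lambda>(y, c) i. if i \<in> K then affine_comb J (c i) y else y i)
            ` ((insert 0 J \<rightarrow>\<^sub>E UNIV) \<times> (K \<rightarrow>\<^sub>E (J \<rightarrow>\<^sub>E UNIV)))"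
proof
  fix x :: "nat \<Rightarrow> 'a^'n"
  assume "x \<in> {x \<in> {..<p} \<rightarrow>\<^sub>E UNIV. affinely_spans J K x}"
  then have x: "x \<in> {..<p} \<rightarrow>\<^sub>E UNIV" "\<forall>i\<in>K. \<exists>c. x i = affine_comb J c x"
    by (auto simp: affinely_spans_def)
  then obtain c where c: "\<forall>i\<in>K. x i = affine_comb J (c i) x" by metis
  define c' where "c' = (\<lambda>i\<in>K. restrict (c i) J)"
  have parts: "{..<p} = insert 0 J \<union> K" "insert 0 J \<inter> K = {}" using J K p by auto
  have "(if i \<in> K then affine_comb J (c' i) (restrict x (insert 0 J)) else restrict x (insert 0 J) i) = x i"
    for i
    using c x(1) parts by (auto simp: c'_def PiE_def extensional_def intro: affine_comb_cong)
  moreover have "restrict x (insert 0 J) \<in> insert 0 J \<rightarrow>\<^sub>E UNIV" "c' \<in> K \<rightarrow>\<^sub>E (J \<rightarrow>\<^sub>E UNIV)"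
    by (auto simp: c'_def)
  ultimately show "x \<in> (\<lambda>(y, c) i. if i \<in> K then affine_comb J (c i) y else y i)
            ` ((insert 0 J \<rightarrow>\<^sub>E UNIV) \<times> (K \<rightarrow>\<^sub>E (J \<rightarrow>\<^sub>E UNIV)))"
    by (intro image_eqI[of _ _ "(restrict x (insert 0 J), c')"]) (auto simp: fun_eq_iff)
qed

lemma sum_prod_affinely_spans_le_sum_PiE:
  fixes P :: "'a::{finite,field}^'n \<Rightarrow> real"
  assumes P: "\<And>z. P z \<ge> 0" and J: "J \<subseteq> {1..<p}" and K: "K = {1..<p} - J" and p: "0 < p"
  shows "(\<Sum>x\<in>{x \<in> {..<p} \<rightarrow>\<^sub>E UNIV. affinely_spans J K x}. \<Prod>i<p. P (x i))
       \<le> (\<Sum>y\<in>insert 0 J \<rightarrow>\<^sub>E UNIV.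
            (\<Prod>s\<in>insert 0 J. P (y s)) * (\<Sum>c\<in>J \<rightarrow>\<^sub>E UNIV. P (affine_comb J c y)) ^ card K)"
proof -
  define J0 where "J0 = insert 0 J"
  define Y where "Y = J0 \<rightarrow>\<^sub>E (UNIV :: ('a^'n) set)"
  define A where "A = J \<rightarrow>\<^sub>E (UNIV :: 'a set)"
  define Cs where "Cs = K \<rightarrow>\<^sub>E A"
  define \<Phi> where "\<Phi> = (\<lambda>(y :: nat \<Rightarrow> 'a^'n, c) i. if i \<in> K then affine_comb J (c i) y else y i)"
  define S where "S = {x \<in> {..<p} \<rightarrow>\<^sub>E (UNIV :: ('a^'n) set). affinely_spans J K x}"
  define F where "F x = (\<Prod>i<p. P (x i))" for x :: "nat \<Rightarrow> 'a^'n"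
  have fin: "finite J" "finite K" "finite J0" using J K by (auto simp: J0_def finite_subset)
  have parts: "{..<p} = J0 \<union> K" "J0 \<inter> K = {}" using J K p by (auto simp: J0_def)
  have "S \<subseteq> \<Phi> ` (Y \<times> Cs)"
    using affinely_spans_subset_image[OF J K p] by (simp add: S_def \<Phi>_def Y_def Cs_def A_def J0_def)
  moreover have "finite (Y \<times> Cs)" using fin by (simp add: Y_def Cs_def A_def finite_PiE)
  moreover have F: "F x \<ge> 0" for x using P by (simp add: F_def prod_nonneg)
  ultimately have "(\<Sum>x\<in>S. F x) \<le> (\<Sum>yc\<in>Y \<times> Cs. F (\<Phi> yc))"
    using sum_mono2[of "\<Phi> ` (Y \<times> Cs)" S F] sum_image_le[of "Y \<times> Cs" F \<Phi>]
    by (simp add: o_def finite_imageI)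
  also have "\<dots> = (\<Sum>y\<in>Y. \<Sum>c\<in>Cs. (\<Prod>s\<in>J0. P (y s)) * (\<Prod>i\<in>K. P (affine_comb J (c i) y)))"
  proof -
    have F_\<Phi>: "F (\<Phi> (y, c)) = (\<Prod>s\<in>J0. P (y s)) * (\<Prod>i\<in>K. P (affine_comb J (c i) y))" for y c
      unfolding F_def parts(1) prod.union_disjoint[OF fin(3,2) parts(2)]
      using parts(2) by (auto simp: \<Phi>_def intro!: arg_cong2[where f = "(*)"] prod.cong)
    show ?thesis
      by (subst sum.cartesian_product) (rule sum.cong, auto simp: F_\<Phi>)
  qed
  also have "\<dots> = (\<Sum>y\<in>Y. (\<Prod>s\<in>J0. P (y s)) * (\<Sum>c\<in>A. P (affine_comb J c y)) ^ card K)"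
  proof -
    have "(\<Sum>c\<in>Cs. \<Prod>i\<in>K. P (affine_comb J (c i) y)) = (\<Sum>c\<in>A. P (affine_comb J c y)) ^ card K" for y
      using prod_sum_PiE[of K "\<lambda>_. A" "\<lambda>_ c. P (affine_comb J c y)"] fin
      by (simp add: Cs_def A_def finite_PiE)
    then show ?thesis by (simp flip: sum_distrib_left)
  qed
  finally show ?thesis by (simp add: S_def F_def Y_def J0_def A_def)
qed

lemma sum_prod_affinely_spans_le:
  fixes P :: "'a::{finite,field}^'n \<Rightarrow> real"
  assumes P: "\<And>z. P z \<ge> 0" and P1: "(\<Sum>z\<in>UNIV. P z) = 1"
    and J: "J \<subseteq> {1..<p}" and K: "K = {1..<p} - J" and p: "0 < p"
    and R: "(\<Sum>z\<in>UNIV. P z ^ Suc (card K)) \<le> R ^ card K"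
  shows "(\<Sum>x\<in>{x \<in> {..<p} \<rightarrow>\<^sub>E UNIV. affinely_spans J K x}. \<Prod>i<p. P (x i))
       \<le> (real CARD('a) ^ card J * R) ^ card K"
proof -
  define j where "j = card K"
  define Y where "Y = insert 0 J \<rightarrow>\<^sub>E (UNIV :: ('a^'n) set)"
  define A where "A = J \<rightarrow>\<^sub>E (UNIV :: 'a set)"
  define G where "G y = (\<Prod>s\<in>insert 0 J. P (y s))" for y :: "nat \<Rightarrow> 'a^'n"
  have fJ: "finite J" "0 \<notin> J" using J finite_subset by auto
  have G: "G y \<ge> 0" for y using P by (simp add: G_def prod_nonneg)
  have "(\<Sum>x\<in>{x \<in> {..<p} \<rightarrow>\<^sub>E UNIV. affinely_spans J K x}. \<Prod>i<p. P (x i))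
      \<le> (\<Sum>y\<in>Y. G y * (\<Sum>c\<in>A. P (affine_comb J c y)) ^ j)"
    unfolding Y_def A_def G_def j_def by (rule sum_prod_affinely_spans_le_sum_PiE[OF P J K p])
  also have "\<dots> \<le> (real CARD('a) ^ card J * R) ^ j"
  proof (cases "j = 0")
    case True
    have "(\<Sum>y\<in>Y. G y) = (\<Prod>s\<in>insert 0 J. \<Sum>z\<in>UNIV. P z)"
      unfolding Y_def G_def using prod_sum_PiE[of "insert 0 J" "\<lambda>_. UNIV" "\<lambda>s. P"] fJ by simp
    then show ?thesis using True P1 by simp
  next
    case False
    have A: "finite A" "A \<noteq> {}" "real (card A) = real CARD('a) ^ card J"
      using fJ by (auto simp: A_def PiE_eq_empty_iff card_PiE finite_PiE)
    have "(\<Sum>y\<in>Y. G y * (\<Sum>c\<in>A. P (affine_comb J c y)) ^ j)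
        \<le> (\<Sum>y\<in>Y. G y * (real (card A) ^ (j - 1) * (\<Sum>c\<in>A. P (affine_comb J c y) ^ j)))"
      using A False P G by (intro sum_mono mult_left_mono sum_power_le_card_power_sum) auto
    also have "\<dots> = real (card A) ^ (j - 1) * (\<Sum>c\<in>A. \<Sum>y\<in>Y. G y * P (affine_comb J c y) ^ j)"
      by (simp add: sum_distrib_left algebra_simps sum.swap[of _ Y A])
    also have "\<dots> \<le> real (card A) ^ (j - 1) * (\<Sum>c\<in>A. \<Sum>z\<in>UNIV. P z ^ Suc j)"
      unfolding Y_def G_def
      by (intro mult_left_mono sum_mono sum_PiE_prod_affine_comb_le fJ P P1) simp
    also have "\<dots> = real (card A) ^ j * (\<Sum>z\<in>UNIV. P z ^ Suc j)"
      using False by (simp add: power_eq_if)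
    also have "\<dots> \<le> real (card A) ^ j * R ^ j"
      using R by (intro mult_left_mono) (auto simp: j_def)
    finally show ?thesis by (simp add: A(3) power_mult_distrib)
  qed
  finally show ?thesis unfolding j_def .
qed

section \<open>Collision probabilities\<close>

definition collision_prob :: "nat \<Rightarrow> 'b::finite pmf \<Rightarrow> real" where
  "collision_prob p P = (\<Sum>x\<in>UNIV. pmf P x ^ p)"

lemma collision_prob_pos: "collision_prob p P > 0"
  unfolding collision_prob_def by (rule sum_power_pos) (auto simp: sum_pmf_eq_1)

lemma lp_smoothness_eq_collision_prob:
  fixes P :: "'b::finite pmf"
  assumes p: "p \<ge> 1"
  shows "lp_smoothness (real p) P
       = (real CARD('b) ^ (p - 1) * collision_prob p P) powr (1 / real p) - 1"
proof -
  define Q where "Q = real CARD('b)"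
  have Q: "Q > 0" by (simp add: Q_def)
  have "\<bar>Q * pmf P x\<bar> powr real p = Q * (Q ^ (p - 1) * pmf P x ^ p)" for x
    using Q p by (simp add: powr_realpow' power_mult_distrib mult.assoc flip: power_Suc)
  then have "1 / Q * (\<Sum>x\<in>UNIV. \<bar>Q * pmf P x\<bar> powr real p)
      = Q ^ (p - 1) * collision_prob p P"
    using Q by (simp add: collision_prob_def sum_distrib_left)
  then show ?thesis by (simp add: lp_smoothness_def norm_p_def Q_def)
qed

lemma prod_of_bool:
  "finite A \<Longrightarrow> (\<Prod>i\<in>A. of_bool (P i)) = (of_bool (\<forall>i\<in>A. P i) :: 'r::comm_semiring_1)"
  by (induction A rule: finite_induct) auto

lemma sum_of_bool_all_eq:
  fixes g :: "nat \<Rightarrow> 'c::finite"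
  assumes p: "0 < p"
  shows "(\<Sum>s\<in>UNIV. of_bool (\<forall>i<p. g i = s)) = (of_bool (\<forall>i<p. g i = g 0) :: real)"
proof -
  define C where "C \<longleftrightarrow> (\<forall>i<p. g i = g 0)"
  have "of_bool (\<forall>i<p. g i = s) = (of_bool (s = g 0) * of_bool C :: real)" for s
    using p by (cases "s = g 0") (auto simp: C_def)
  then have "(\<Sum>s\<in>UNIV. of_bool (\<forall>i<p. g i = s)) = (of_bool C :: real)" by simp
  then show ?thesis by (simp only: C_def)
qed

lemma collision_prob_map_pmf:
  fixes P :: "'b::finite pmf" and h :: "'b \<Rightarrow> 'c::finite"
  assumes p: "0 < p"
  shows "collision_prob p (map_pmf h P)
       = (\<Sum>x\<in>{..<p} \<rightarrow>\<^sub>E UNIV. (\<Prod>i<p. pmf P (x i)) * of_bool (\<forall>i<p. h (x i) = h (x 0)))"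
proof -
  define f where "f s z = pmf P z * of_bool (h z = s)" for s z
  have "pmf (map_pmf h P) s = (\<Sum>z\<in>UNIV. f s z)" for s
    by (simp add: f_def pmf_map measure_measure_pmf_finite vimage_def)
  then have "collision_prob p (map_pmf h P)
      = (\<Sum>s\<in>UNIV. \<Sum>x\<in>{..<p} \<rightarrow>\<^sub>E UNIV. \<Prod>i<p. f s (x i))"
    unfolding collision_prob_def
    using prod_sum_PiE[of "{..<p}" "\<lambda>_. UNIV" "\<lambda>_. f _"] by simp
  also have "\<dots> = (\<Sum>x\<in>{..<p} \<rightarrow>\<^sub>E UNIV.
                      \<Sum>s\<in>UNIV. (\<Prod>i<p. pmf P (x i)) * of_bool (\<forall>i<p. h (x i) = s))"
    unfolding f_def prod.distrib prod_of_bool[OF finite_lessThan]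
    by (subst sum.swap) (simp add: Ball_def)
  also have "\<dots> = (\<Sum>x\<in>{..<p} \<rightarrow>\<^sub>E UNIV. (\<Prod>i<p. pmf P (x i)) *
                    (\<Sum>s\<in>UNIV. of_bool (\<forall>i<p. h (x i) = s)))"
    by (simp only: sum_distrib_left)
  finally show ?thesis by (simp only: sum_of_bool_all_eq[OF p])
qed

lemma collision_prob_parity_check:
  fixes P :: "('a::{finite,field}^'n) pmf"
  assumes H: "parity_check H C" and p: "0 < p"
  shows "collision_prob p (map_pmf (\<lambda>z. H *v z) P)
       = (\<Sum>x\<in>{..<p} \<rightarrow>\<^sub>E UNIV. (\<Prod>i<p. pmf P (x i)) * of_bool (\<forall>i<p. x i - x 0 \<in> C))"
proof -
  have C: "C = {x. H *v x = 0}" using H by (simp add: parity_check_def)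
  have ker: "H *v x = H *v y \<longleftrightarrow> x - y \<in> C" for x y
    by (simp add: C matrix_vector_mult_diff_distrib)
  show ?thesis unfolding collision_prob_map_pmf[OF p] by (simp only: ker)
qed

lemma collision_prob_root_eq_renyi_entropy:
  fixes P :: "'b::finite pmf" and q :: real
  assumes q: "q > 1" and p: "p \<ge> 2"
  shows "collision_prob p P powr (1 / (real p - 1)) = q powr (- renyi_entropy q (real p) P)"
proof -
  have "(\<Sum>x\<in>UNIV. pmf P x powr real p) = collision_prob p P"
    using p by (simp add: collision_prob_def powr_realpow')
  then have H: "- renyi_entropy q (real p) P = log q (collision_prob p P) * (1 / (real p - 1))"
    using p by (simp add: renyi_entropy_def field_simps)
  have "collision_prob p P = q powr log q (collision_prob p P)"
    using q collision_prob_pos[of p P] by simp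
  then have "collision_prob p P powr (1 / (real p - 1))
      = q powr (log q (collision_prob p P) * (1 / (real p - 1)))"
    by (metis powr_powr)
  then show ?thesis by (simp only: H)
qed

lemma renyi_entropy_condition:
  fixes P :: "'b::finite pmf" and q \<epsilon> :: real
  assumes q: "q > 1" and e: "\<epsilon> > 0" and p: "p \<ge> 2"
    and H: "real m \<le> renyi_entropy q (real p) P - real p - log q (1 / \<epsilon>)"
  shows "q ^ m * q ^ (p - 1) * collision_prob p P powr (1 / (real p - 1)) \<le> \<epsilon> / q"
proof -
  have "q ^ m = q powr real m" "q ^ (p - 1) = q powr (real p - 1)"
    using q p powr_realpow[of q "p - 1"] by (simp_all add: of_nat_diff powr_realpow)
  then have "q ^ m * q ^ (p - 1) * collision_prob p P powr (1 / (real p - 1))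
      = q powr (real m + (real p - 1) + - renyi_entropy q (real p) P)"
    by (simp only: collision_prob_root_eq_renyi_entropy[OF q p] powr_add)
  also have "\<dots> \<le> q powr (log q \<epsilon> - 1)"
    using H q e by (intro powr_mono) (auto simp: log_divide)
  also have "\<dots> = \<epsilon> / q"
    using q e by (simp add: powr_diff)
  finally show ?thesis .
qed

section \<open>Averaging over the codes\<close>

lemma sum_collision_prob_codes_le:
  fixes P :: "('a::{finite,field}^'n) pmf" and Hof :: "('a^'n) set \<Rightarrow> 'a^'n^'m"
  assumes k: "k \<le> CARD('n)" and H: "\<forall>C\<in>linear_codes k. parity_check (Hof C) C" and p: "0 < p"
  shows "(\<Sum>C\<in>linear_codes k. collision_prob p (map_pmf (\<lambda>z. Hof C *v z) P))
    \<le> real (card (linear_codes k :: ('a^'n) set set)) *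
       (\<Sum>J\<in>Pow {1..<p}. inverse (real CARD('a) ^ (CARD('n) - k)) ^ card J *
          (\<Sum>x\<in>{x \<in> {..<p} \<rightarrow>\<^sub>E UNIV. affinely_spans J ({1..<p} - J) x}. \<Prod>i<p. pmf P (x i)))"
proof -
  define Cs where "Cs = (linear_codes k :: ('a^'n) set set)"
  define X where "X = {..<p} \<rightarrow>\<^sub>E (UNIV :: ('a^'n) set)"
  define F where "F x = (\<Prod>i<p. pmf P (x i))" for x :: "nat \<Rightarrow> 'a^'n"
  define I where "I = {1..<p}"
  define w where "w = inverse (real CARD('a) ^ (CARD('n) - k))"
  have F: "F x \<ge> 0" for x by (simp add: F_def prod_nonneg)
  have "(\<Sum>C\<in>Cs. collision_prob p (map_pmf (\<lambda>z. Hof C *v z) P))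
      = (\<Sum>C\<in>Cs. \<Sum>x\<in>X. F x * of_bool (\<forall>i<p. x i - x 0 \<in> C))"
    using H p by (intro sum.cong refl) (simp add: collision_prob_parity_check Cs_def X_def F_def)
  also have "\<dots> = (\<Sum>x\<in>X. F x * real (card {C \<in> Cs. \<forall>i<p. x i - x 0 \<in> C}))"
    by (subst sum.swap) (simp add: Int_def flip: sum_distrib_left)
  also have "\<dots> \<le> (\<Sum>x\<in>X. F x * real (card {C \<in> Cs. \<forall>i\<in>I. x i - x 0 \<in> C}))"
    using F by (intro sum_mono mult_left_mono) (auto simp: I_def intro!: card_mono)
  also have "\<dots> \<le> (\<Sum>x\<in>X. F x *
      (real (card Cs) * (\<Sum>J\<in>Pow I. of_bool (affinely_spans J (I - J) x) * w ^ card J)))"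
    using F card_codes_containing_differences_le_sum[OF k, of I]
    by (intro sum_mono mult_left_mono) (auto simp: Cs_def I_def w_def)
  also have "\<dots> = real (card Cs) *
      (\<Sum>x\<in>X. \<Sum>J\<in>Pow I. w ^ card J * (F x * of_bool (affinely_spans J (I - J) x)))"
    by (simp add: sum_distrib_left mult_ac)
  also have "\<dots> = real (card Cs) *
      (\<Sum>J\<in>Pow I. w ^ card J * (\<Sum>x\<in>{x \<in> X. affinely_spans J (I - J) x}. F x))"
  proof -
    have "(\<Sum>x\<in>X. F x * of_bool (Q x)) = (\<Sum>x\<in>{x \<in> X. Q x}. F x)" for Q
      by (simp add: X_def finite_PiE Int_def)
    then show ?thesis by (subst sum.swap) (simp flip: sum_distrib_left)
  qed
  finally show ?thesis by (simp add: Cs_def X_def F_def I_def w_def)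
qed

lemma sum_prod_affinely_spans_scaled_le:
  fixes P :: "('a::{finite,field}^'n) pmf"
  assumes J: "J \<subseteq> {1..<p}" and p: "0 < p"
    and key: "real CARD('a) ^ m * real CARD('a) ^ (p - 1)
                * collision_prob p P powr (1 / (real p - 1)) \<le> \<epsilon>"
  shows "(real CARD('a) ^ m) ^ card ({1..<p} - J) *
           (\<Sum>x\<in>{x \<in> {..<p} \<rightarrow>\<^sub>E UNIV. affinely_spans J ({1..<p} - J) x}. \<Prod>i<p. pmf P (x i))
         \<le> \<epsilon> ^ card ({1..<p} - J)"
proof -
  define q where "q = real CARD('a)"
  define K where "K = {1..<p} - J"
  define R where "R = collision_prob p P powr (1 / (real p - 1))"
  have q: "q \<ge> 1" using card_field_ge_2[where 'a = 'a] by (simp add: q_def)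
  have R: "R \<ge> 0" by (simp add: R_def)
  have JK: "card K + card J = p - 1"
    using J card_Diff_subset[of J "{1..<p}"] card_mono[OF _ J] by (simp add: K_def finite_subset)
  have "(\<Sum>z\<in>UNIV. pmf P z ^ Suc (card K)) \<le> R ^ card K"
    unfolding R_def collision_prob_def
    using JK p by (intro sum_power_Suc_le_moment) (auto simp: sum_pmf_eq_1)
  then have "(\<Sum>x\<in>{x \<in> {..<p} \<rightarrow>\<^sub>E UNIV. affinely_spans J K x}. \<Prod>i<p. pmf P (x i))
      \<le> (q ^ card J * R) ^ card K"
    unfolding q_def by (intro sum_prod_affinely_spans_le[OF _ _ J K_def p]) (auto simp: sum_pmf_eq_1)
  then have "(q ^ m) ^ card K *
        (\<Sum>x\<in>{x \<in> {..<p} \<rightarrow>\<^sub>E UNIV. affinely_spans J K x}. \<Prod>i<p. pmf P (x i))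
      \<le> (q ^ m * q ^ card J * R) ^ card K"
    using q by (simp add: mult_left_mono power_mult_distrib mult.assoc)
  also have "\<dots> \<le> \<epsilon> ^ card K"
  proof (rule power_mono)
    have "q ^ card J \<le> q ^ (p - 1)" using JK q by (intro power_increasing) auto
    then have "q ^ m * q ^ card J * R \<le> q ^ m * q ^ (p - 1) * R"
      using q R by (intro mult_right_mono mult_left_mono) auto
    also have "\<dots> \<le> \<epsilon>" using key by (simp add: q_def R_def)
    finally show "q ^ m * q ^ card J * R \<le> \<epsilon>" .
  qed (use q R in simp)
  finally show ?thesis by (simp add: q_def K_def)
qed

lemma sum_collision_prob_codes_le_power:
  fixes P :: "('a::{finite,field}^'n) pmf" and Hof :: "('a^'n) set \<Rightarrow> 'a^'n^'m"
  assumes mn: "CARD('m) \<le> CARD('n)" and p: "0 < p"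
    and H: "\<forall>C\<in>linear_codes (CARD('n) - CARD('m)). parity_check (Hof C) C"
    and key: "real CARD('a) ^ CARD('m) * real CARD('a) ^ (p - 1)
                * collision_prob p P powr (1 / (real p - 1)) \<le> \<epsilon>"
  shows "(\<Sum>C\<in>linear_codes (CARD('n) - CARD('m)).
            (real CARD('a) ^ CARD('m)) ^ (p - 1) * collision_prob p (map_pmf (\<lambda>z. Hof C *v z) P))
         \<le> real (card (linear_codes (CARD('n) - CARD('m)) :: ('a^'n) set set)) * (1 + \<epsilon>) ^ (p - 1)"
proof -
  define Cs where "Cs = (linear_codes (CARD('n) - CARD('m)) :: ('a^'n) set set)"
  define Q where "Q = real CARD('a) ^ CARD('m)"
  define I where "I = {1..<p}"
  define S where "S J = (\<Sum>x\<in>{x \<in> {..<p} \<rightarrow>\<^sub>E UNIV. affinely_spans J (I - J) x}. \<Prod>i<p. pmf P (x i))"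
    for J
  have Q: "Q > 0" by (simp add: Q_def)
  have bound: "Q ^ (p - 1) * (inverse Q ^ card J * S J) \<le> \<epsilon> ^ card (I - J)" if "J \<subseteq> I" for J
  proof -
    have "card (I - J) + card J = p - 1"
      using that card_Diff_subset[of J I] card_mono[OF _ that] by (simp add: I_def finite_subset)
    then have "Q ^ (p - 1) = Q ^ card (I - J) * Q ^ card J"
      by (metis power_add)
    then have "Q ^ (p - 1) * inverse Q ^ card J = Q ^ card (I - J)"
      using Q by (simp add: power_inverse)
    then show ?thesis
      using sum_prod_affinely_spans_scaled_le[OF _ p key, of J] that
      by (simp add: Q_def I_def S_def mult.assoc[symmetric])
  qed
  have "(\<Sum>C\<in>Cs. Q ^ (p - 1) * collision_prob p (map_pmf (\<lambda>z. Hof C *v z) P))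
      \<le> Q ^ (p - 1) * (real (card Cs) * (\<Sum>J\<in>Pow I. inverse Q ^ card J * S J))"
    using sum_collision_prob_codes_le[OF _ H p] mn Q
    by (simp add: Cs_def Q_def I_def S_def flip: sum_distrib_left)
  also have "\<dots> = real (card Cs) * (\<Sum>J\<in>Pow I. Q ^ (p - 1) * (inverse Q ^ card J * S J))"
    by (simp add: sum_distrib_left mult_ac)
  also have "\<dots> \<le> real (card Cs) * (\<Sum>J\<in>Pow I. \<epsilon> ^ card (I - J))"
    using bound by (intro mult_left_mono sum_mono) auto
  also have "(\<Sum>J\<in>Pow I. \<epsilon> ^ card (I - J)) = (1 + \<epsilon>) ^ (p - 1)"
    using prod_add[of I "\<lambda>_. 1" "\<lambda>_. \<epsilon>"] by (simp add: I_def)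
  finally show ?thesis by (simp add: Cs_def Q_def)
qed

theorem theorem3p1:
  fixes P :: "('a::{finite,field} ^ 'n) pmf"
    and Hof :: "('a ^ 'n) set \<Rightarrow> 'a ^ 'n ^ 'm"
    and \<epsilon> :: real and p :: nat
  assumes "\<epsilon> > 0"
    and "p \<ge> 2"
    and "CARD('m) \<le> CARD('n)"
    and "\<forall>C \<in> linear_codes (CARD('n) - CARD('m)). parity_check (Hof C) C"
    and "real CARD('m) \<le> renyi_entropy (real CARD('a)) (real p) P - real p
                         - log (real CARD('a)) (1 / \<epsilon>)"
  shows "(\<Sum>C \<in> linear_codes (CARD('n) - CARD('m)).
            lp_smoothness (real p) (map_pmf (\<lambda>z. Hof C *v z) P))
         / real (card (linear_codes (CARD('n) - CARD('m)) :: ('a ^ 'n) set set)) \<le> \<epsilon>"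
proof -
  define Cs where "Cs = (linear_codes (CARD('n) - CARD('m)) :: ('a ^ 'n) set set)"
  define q where "q = real CARD('a)"
  define M where "M C = (q ^ CARD('m)) ^ (p - 1) * collision_prob p (map_pmf (\<lambda>z. Hof C *v z) P)" for C
  have q: "q > 1" using card_field_ge_2[where 'a = 'a] by (simp add: q_def)
  have key: "q ^ CARD('m) * q ^ (p - 1) * collision_prob p P powr (1 / (real p - 1)) \<le> \<epsilon>"
  proof -
    have "q ^ CARD('m) * q ^ (p - 1) * collision_prob p P powr (1 / (real p - 1)) \<le> \<epsilon> / q"
      using renyi_entropy_condition[OF q assms(1,2)] assms(5) by (simp add: q_def)
    also have "\<dots> \<le> \<epsilon>" using q assms(1) by (simp add: divide_le_eq)
    finally show ?thesis .
  qed
  have "(\<Sum>C\<in>Cs. M C) \<le> real (card Cs) * (1 + \<epsilon>) ^ (p - 1)"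
    using sum_collision_prob_codes_le_power[OF assms(3) _ assms(4)] key assms(2)
    by (simp add: Cs_def M_def q_def)
  also have "\<dots> \<le> real (card Cs) * (1 + \<epsilon>) ^ p"
    using assms(1) by (intro mult_left_mono power_increasing) auto
  finally have root: "(\<Sum>C\<in>Cs. M C powr (1 / real p)) \<le> real (card Cs) * (1 + \<epsilon>)"
    using assms(1,2)
    by (intro sum_powr_inverse_le) (auto simp: M_def q_def less_imp_le[OF collision_prob_pos])
  have "lp_smoothness (real p) (map_pmf (\<lambda>z. Hof C *v z) P) = M C powr (1 / real p) - 1" for C
    using assms(2) by (simp add: lp_smoothness_eq_collision_prob M_def q_def power_mult)
  then have "(\<Sum>C\<in>Cs. lp_smoothness (real p) (map_pmf (\<lambda>z. Hof C *v z) P))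
      = (\<Sum>C\<in>Cs. M C powr (1 / real p)) - real (card Cs)"
    by (simp add: sum_subtractf)
  also have "\<dots> \<le> real (card Cs) * \<epsilon>"
    using root by (simp add: algebra_simps)
  finally show ?thesis
    using assms(1) by (cases "card Cs = 0") (simp_all add: Cs_def divide_le_eq mult.commute)
qed

end
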